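(* The cofinality of $\mathfrak{hc}$ is uncountable.
   Context: A graph is a pair $(V,E)$ with $E\subseteq[V]^2$; its size is $|V|$. The chromatic number of a graph is the least cardinal $\mu$ admitting a proper coloring $c:V\to\mu$; a graph is uncountably chromatic if its chromatic number is uncountable. A graph $H$ is a minor of $G$ if there are pairwise disjoint non-empty vertex sets $(X_u)_{u\in V_H}$ of $G$, each inducing a connected subgraph, such that for each edge $\{u,v\}$ of $H$ some vertex of $X_u$ is adjacent in $G$ to some vertex of $X_v$. $K_{\omega_1}$ is the complete graph on $\omega_1$ vertices. $\mathfrak{hc}$ denotes the least size of an uncountably chromatic graph with no $K_{\omega_1}$ minor. *)

theory Defs
  imports Main "HOL-Library.Countable_Set"
begin

definition graph :: "'a set \<Rightarrow> 'a set set \<Rightarrow> bool" where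
  "graph V E \<longleftrightarrow> (\<forall>e\<in>E. \<exists>u v. u \<in> V \<and> v \<in> V \<and> u \<noteq> v \<and> e = {u, v})"

text \<open>Chromatic number uncountable: there is no proper colouring with
  countably many colours (the colour set omega is represented by nat).\<close>
definition uncountably_chromatic :: "'a set \<Rightarrow> 'a set set \<Rightarrow> bool" where
  "uncountably_chromatic V E \<longleftrightarrow>
     \<not> (\<exists>c :: 'a \<Rightarrow> nat. \<forall>u\<in>V. \<forall>v\<in>V. {u, v} \<in> E \<longrightarrow> c u \<noteq> c v)"

definition connected_in :: "'a set \<Rightarrow> 'a set set \<Rightarrow> 'a set \<Rightarrow> bool" where
  "connected_in V E X \<longleftrightarrow> X \<noteq> {} \<and> X \<subseteq> V \<and>
     (\<forall>x\<in>X. \<forall>y\<in>X. (x, y) \<in> {(u, v). u \<in> X \<and> v \<in> X \<and> {u, v} \<in> E}\<^sup>*)"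

text \<open>The branch sets are indexed
  by themselves (the indexing u \<mapsto> X_u is injective since they are disjoint and
  nonempty).\<close>
definition has_K_omega1_minor :: "'a set \<Rightarrow> 'a set set \<Rightarrow> bool" where
  "has_K_omega1_minor V E \<longleftrightarrow>
     (\<exists>\<X> :: 'a set set. (card_of \<X>, cardSuc natLeq) \<in> ordIso \<and>
        (\<forall>X\<in>\<X>. connected_in V E X) \<and>
        (\<forall>X\<in>\<X>. \<forall>Y\<in>\<X>. X \<noteq> Y \<longrightarrow> X \<inter> Y = {}) \<and>
        (\<forall>X\<in>\<X>. \<forall>Y\<in>\<X>. X \<noteq> Y \<longrightarrow> (\<exists>x\<in>X. \<exists>y\<in>Y. {x, y} \<in> E)))"

text \<open>The graphs competing in the definition of hc.\<close>
definition hc_candidate :: "'a set \<Rightarrow> 'a set set \<Rightarrow> bool" where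
  "hc_candidate V E \<longleftrightarrow> graph V E \<and> uncountably_chromatic V E \<and> \<not> has_K_omega1_minor V E"

end

theory Submission
  imports Defs
begin

text \<open>If \<open>K\<close> were a countable cofinal subset of a graph \<open>G\<close> of size \<open>hc\<close>, well-ordered in
  order type \<open>|V|\<close>, then \<open>V\<close> would be the countable union of the proper initial segments
  below the points of \<open>K\<close>. Each of these induces a subgraph of size \<open>< hc\<close> which, as a
  subgraph of \<open>G\<close>, has no \<open>K\<^sub>\<omega>\<^sub>1\<close> minor; by minimality of \<open>hc\<close> it is countably
  chromatic. Pairing the index of a segment with a colour inside it gives a countable
  colouring of \<open>G\<close>.\<close>

definition induced_edges :: "'a set set \<Rightarrow> 'a set \<Rightarrow> 'a set set" where
  "induced_edges E S = {e \<in> E. e \<subseteq> S}"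

lemma induced_edges_subset: "induced_edges E S \<subseteq> E"
  unfolding induced_edges_def by auto

lemma graph_induced_edges: "graph V E \<Longrightarrow> graph S (induced_edges E S)"
  unfolding graph_def induced_edges_def by fastforce

lemma connected_in_mono:
  assumes "connected_in S F X" "S \<subseteq> V" "F \<subseteq> E"
  shows "connected_in V E X"
proof -
  let ?R = "\<lambda>E. {(u, v). u \<in> X \<and> v \<in> X \<and> {u, v} \<in> E}"
  have "(?R F)\<^sup>* \<subseteq> (?R E)\<^sup>*"
    using assms(3) by (intro rtrancl_mono) auto
  moreover have "(x, y) \<in> (?R F)\<^sup>*" if "x \<in> X" "y \<in> X" for x y
    using assms(1) that unfolding connected_in_def by auto
  ultimately have "(x, y) \<in> (?R E)\<^sup>*" if "x \<in> X" "y \<in> X" for x y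
    using that by blast
  with assms(1,2) show ?thesis
    unfolding connected_in_def by auto
qed

lemma has_K_omega1_minor_mono:
  assumes "has_K_omega1_minor S F" "S \<subseteq> V" "F \<subseteq> E"
  shows "has_K_omega1_minor V E"
proof -
  obtain \<X> where card: "(card_of \<X>, cardSuc natLeq) \<in> ordIso"
    and connected: "\<forall>X\<in>\<X>. connected_in S F X"
    and disjoint: "\<forall>X\<in>\<X>. \<forall>Y\<in>\<X>. X \<noteq> Y \<longrightarrow> X \<inter> Y = {}"
    and adjacent: "\<forall>X\<in>\<X>. \<forall>Y\<in>\<X>. X \<noteq> Y \<longrightarrow> (\<exists>x\<in>X. \<exists>y\<in>Y. {x, y} \<in> F)"
    using assms(1) unfolding has_K_omega1_minor_def by (elim exE conjE) (rule that)
  have "\<forall>X\<in>\<X>. connected_in V E X"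
    using connected connected_in_mono[OF _ assms(2,3)] by blast
  moreover have "\<forall>X\<in>\<X>. \<forall>Y\<in>\<X>. X \<noteq> Y \<longrightarrow> (\<exists>x\<in>X. \<exists>y\<in>Y. {x, y} \<in> E)"
    using adjacent assms(3) by blast
  ultimately show ?thesis
    unfolding has_K_omega1_minor_def using card disjoint by (intro exI[of _ \<X>] conjI)
qed

lemma induced_subgraph_countably_chromatic:
  assumes "hc_candidate V E" "S \<subseteq> V" "\<not> hc_candidate S (induced_edges E S)"
  shows "\<not> uncountably_chromatic S (induced_edges E S)"
  using assms has_K_omega1_minor_mono[OF _ \<open>S \<subseteq> V\<close> induced_edges_subset] graph_induced_edges
  unfolding hc_candidate_def by blast

lemma countably_chromatic_countable_cover:
  fixes K :: "'k set" and S :: "'k \<Rightarrow> 'a set"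
  assumes "countable K" "V \<subseteq> (\<Union>k\<in>K. S k)"
    and "\<And>k. k \<in> K \<Longrightarrow> \<not> uncountably_chromatic (S k) (induced_edges E (S k))"
  shows "\<not> uncountably_chromatic V E"
proof -
  have "\<forall>k\<in>K. \<exists>c :: 'a \<Rightarrow> nat. \<forall>u\<in>S k. \<forall>v\<in>S k. {u, v} \<in> induced_edges E (S k) \<longrightarrow> c u \<noteq> c v"
    using assms(3) unfolding uncountably_chromatic_def by blast
  then obtain c :: "'k \<Rightarrow> 'a \<Rightarrow> nat"
    where c: "\<forall>k\<in>K. \<forall>u\<in>S k. \<forall>v\<in>S k. {u, v} \<in> induced_edges E (S k) \<longrightarrow> c k u \<noteq> c k v"
    by (metis bchoice)
  have "\<forall>v\<in>V. \<exists>k. k \<in> K \<and> v \<in> S k"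
    using assms(2) by blast
  then obtain seg where seg: "\<forall>v\<in>V. seg v \<in> K \<and> v \<in> S (seg v)"
    by (metis bchoice)
  define col where "col v = prod_encode (to_nat_on K (seg v), c (seg v) v)" for v
  have "col u \<noteq> col v" if uv: "u \<in> V" "v \<in> V" "{u, v} \<in> E" for u v
  proof
    assume "col u = col v"
    then have index: "to_nat_on K (seg u) = to_nat_on K (seg v)"
      and colour: "c (seg u) u = c (seg v) v"
      unfolding col_def by (simp_all add: prod_encode_eq)
    have u: "seg u \<in> K" "u \<in> S (seg u)" and v: "seg v \<in> K" "v \<in> S (seg v)"
      using seg uv(1,2) by auto
    have same: "seg u = seg v"
      using index to_nat_on_inj[OF assms(1) u(1) v(1)] by simp
    have "{u, v} \<in> induced_edges E (S (seg u))"
      using uv(3) u(2) v(2) same unfolding induced_edges_def by auto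
    then show False
      using c u v same colour by auto
  qed
  then show ?thesis
    unfolding uncountably_chromatic_def by blast
qed

lemma cofinal_imp_Field_subset_UN_underS:
  "cofinal K r \<Longrightarrow> Field r \<subseteq> (\<Union>k\<in>K. underS r k)"
  unfolding cofinal_def underS_def by blast

lemma card_of_underS_ordLess:
  assumes "card_order_on V r" "k \<in> V"
  shows "(card_of (underS r k), card_of V) \<in> ordLess"
proof -
  have "Card_order r" "k \<in> Field r"
    using assms card_order_on_Card_order by blast+
  then have "(card_of (underS r k), r) \<in> ordLess"
    by (rule card_of_underS)
  moreover have "(r, card_of V) \<in> ordIso"
    using assms(1) card_of_unique by blast
  ultimately show ?thesis
    by (rule ordLess_ordIso_trans)
qed

theorem mainTheorem3:
  fixes V :: "'a set" and E :: "'a set set"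
  assumes "hc_candidate V E"
    and "\<forall>(V' :: 'a set) E'. hc_candidate V' E' \<longrightarrow> (card_of V, card_of V') \<in> ordLeq"
  shows "\<forall>r K. card_order_on V r \<and> K \<subseteq> V \<and> cofinal K r \<longrightarrow> uncountable K"
proof (intro allI impI notI)
  fix r and K :: "'a set"
  assume "card_order_on V r \<and> K \<subseteq> V \<and> cofinal K r" and "countable K"
  then have r: "card_order_on V r" and "K \<subseteq> V" "cofinal K r" "countable K" by auto
  have Field_r: "Field r = V"
    using r card_order_on_Card_order by blast
  have "\<not> uncountably_chromatic (underS r k) (induced_edges E (underS r k))" if "k \<in> K" for k
  proof (rule induced_subgraph_countably_chromatic[OF assms(1)])
    show "underS r k \<subseteq> V"
      using Field_r underS_Field by fastforce
    have "(card_of (underS r k), card_of V) \<in> ordLess"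
      using card_of_underS_ordLess[OF r] \<open>K \<subseteq> V\<close> that by blast
    then show "\<not> hc_candidate (underS r k) (induced_edges E (underS r k))"
      using assms(2) not_ordLess_ordLeq by blast
  qed
  then have "\<not> uncountably_chromatic V E"
    using countably_chromatic_countable_cover[OF \<open>countable K\<close>]
      cofinal_imp_Field_subset_UN_underS[OF \<open>cofinal K r\<close>] Field_r by blast
  then show False
    using assms(1) unfolding hc_candidate_def by blast
qed

end
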